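(* Let $\kappa,\kappa'$ be two cardinals such that $\kappa\geq 2^{\kappa'}$, and assume $\kappa$ is infinite. Then every functor ${\sf Sets}^{\leq\kappa}_{\neq\emptyset}\to{\sf Sets}^{\leq\kappa'}_{\neq\emptyset}$ and every functor ${\sf Sets}^{\leq\kappa}_{*}\to{\sf Sets}^{\leq\kappa'}_{*}$ is isomorphic to a constant functor.
   Context: For a cardinal $\lambda$, ${\sf Sets}^{\leq\lambda}_{\neq\emptyset}$ denotes the category of non-empty sets of cardinality $\leq\lambda$ with all maps, and ${\sf Sets}^{\leq\lambda}_{*}$ the category of pointed sets of cardinality $\leq\lambda$ with base-point preserving maps. *)

theory Defs
  imports "HOL-Library.FuncSet"
begin

text \<open>Category Sets^{<=K}_{nonempty}, modelled (up to equivalence of categories) by the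
  full subcategory of nonempty subsets of a fixed carrier K with |K| = kappa.\<close>

definition ne_obj :: "'a set \<Rightarrow> 'a set \<Rightarrow> bool" where
  "ne_obj K X \<longleftrightarrow> X \<noteq> {} \<and> X \<subseteq> K"

definition is_ne_functor ::
  "'a set \<Rightarrow> 'b set \<Rightarrow> ('a set \<Rightarrow> 'b set) \<Rightarrow> ('a set \<Rightarrow> 'a set \<Rightarrow> ('a \<Rightarrow> 'a) \<Rightarrow> ('b \<Rightarrow> 'b)) \<Rightarrow> bool" where
  "is_ne_functor K K' FO FM \<longleftrightarrow>
    (\<forall>X. ne_obj K X \<longrightarrow> ne_obj K' (FO X)) \<and>
    (\<forall>X Y f. ne_obj K X \<and> ne_obj K Y \<and> f \<in> X \<rightarrow>\<^sub>E Y \<longrightarrow> FM X Y f \<in> FO X \<rightarrow>\<^sub>E FO Y) \<and>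
    (\<forall>X. ne_obj K X \<longrightarrow> FM X X (\<lambda>x\<in>X. x) = (\<lambda>y\<in>FO X. y)) \<and>
    (\<forall>X Y Z f g. ne_obj K X \<and> ne_obj K Y \<and> ne_obj K Z \<and> f \<in> X \<rightarrow>\<^sub>E Y \<and> g \<in> Y \<rightarrow>\<^sub>E Z \<longrightarrow>
        FM X Z (compose X g f) = compose (FO X) (FM Y Z g) (FM X Y f))"

definition ne_iso_const ::
  "'a set \<Rightarrow> 'b set \<Rightarrow> ('a set \<Rightarrow> 'b set) \<Rightarrow> ('a set \<Rightarrow> 'a set \<Rightarrow> ('a \<Rightarrow> 'a) \<Rightarrow> ('b \<Rightarrow> 'b)) \<Rightarrow> bool" where
  "ne_iso_const K K' FO FM \<longleftrightarrow>
    (\<exists>C \<eta>. ne_obj K' C \<and>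
      (\<forall>X. ne_obj K X \<longrightarrow> \<eta> X \<in> FO X \<rightarrow>\<^sub>E C \<and> bij_betw (\<eta> X) (FO X) C) \<and>
      (\<forall>X Y f. ne_obj K X \<and> ne_obj K Y \<and> f \<in> X \<rightarrow>\<^sub>E Y \<longrightarrow>
         compose (FO X) (\<eta> Y) (FM X Y f) = compose (FO X) (\<lambda>c\<in>C. c) (\<eta> X)))"

definition pt_obj :: "'a set \<Rightarrow> 'a set \<times> 'a \<Rightarrow> bool" where
  "pt_obj K P \<longleftrightarrow> fst P \<subseteq> K \<and> snd P \<in> fst P"

definition pt_hom :: "'a set \<times> 'a \<Rightarrow> 'a set \<times> 'a \<Rightarrow> ('a \<Rightarrow> 'a) \<Rightarrow> bool" where
  "pt_hom P Q f \<longleftrightarrow> f \<in> fst P \<rightarrow>\<^sub>E fst Q \<and> f (snd P) = snd Q"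

definition is_pt_functor ::
  "'a set \<Rightarrow> 'b set \<Rightarrow> ('a set \<times> 'a \<Rightarrow> 'b set \<times> 'b) \<Rightarrow>
   ('a set \<times> 'a \<Rightarrow> 'a set \<times> 'a \<Rightarrow> ('a \<Rightarrow> 'a) \<Rightarrow> ('b \<Rightarrow> 'b)) \<Rightarrow> bool" where
  "is_pt_functor K K' FO FM \<longleftrightarrow>
    (\<forall>P. pt_obj K P \<longrightarrow> pt_obj K' (FO P)) \<and>
    (\<forall>P Q f. pt_obj K P \<and> pt_obj K Q \<and> pt_hom P Q f \<longrightarrow> pt_hom (FO P) (FO Q) (FM P Q f)) \<and>
    (\<forall>P. pt_obj K P \<longrightarrow> FM P P (\<lambda>x\<in>fst P. x) = (\<lambda>y\<in>fst (FO P). y)) \<and>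
    (\<forall>P Q R f g. pt_obj K P \<and> pt_obj K Q \<and> pt_obj K R \<and> pt_hom P Q f \<and> pt_hom Q R g \<longrightarrow>
        FM P R (compose (fst P) g f) = compose (fst (FO P)) (FM Q R g) (FM P Q f))"

definition pt_iso_const ::
  "'a set \<Rightarrow> 'b set \<Rightarrow> ('a set \<times> 'a \<Rightarrow> 'b set \<times> 'b) \<Rightarrow>
   ('a set \<times> 'a \<Rightarrow> 'a set \<times> 'a \<Rightarrow> ('a \<Rightarrow> 'a) \<Rightarrow> ('b \<Rightarrow> 'b)) \<Rightarrow> bool" where
  "pt_iso_const K K' FO FM \<longleftrightarrow>
    (\<exists>C \<eta>. pt_obj K' C \<and>
      (\<forall>P. pt_obj K P \<longrightarrow> pt_hom (FO P) C (\<eta> P) \<and> bij_betw (\<eta> P) (fst (FO P)) (fst C)) \<and>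
      (\<forall>P Q f. pt_obj K P \<and> pt_obj K Q \<and> pt_hom P Q f \<longrightarrow>
         compose (fst (FO P)) (\<eta> Q) (FM P Q f) = compose (fst (FO P)) (\<lambda>c\<in>fst C. c) (\<eta> P)))"

end

theory Submission
  imports Defs "HOL-Library.Equipollence"
begin

text \<open>Fix a point p. For every object X, the map X \<rightarrow> {p} and any section {p} \<rightarrow> X compose
  to a constant self-map c of X, so F(X \<rightarrow> {p}) is a bijection FX \<cong> F{p}, automatically
  natural in X, as soon as F c is the identity of FX. This is forced by size: K contains a
  wedge of |K| copies of X glued at the base point, and for j \<in> K there is a retraction onto X
  that is the identity on every copy i \<noteq> j and collapses copy j to the base point. If F c
  moved some y \<in> FX, the images of y under the |K| copy inclusions would be pairwise distinct,
  giving |K| \<le> |K'|, which contradicts 2^|K'| \<le> |K|.\<close>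

lemma infinite_times_self_eqpoll: "infinite A \<Longrightarrow> A \<times> A \<approx> A"
  by (simp add: eqpoll_iff_card_of_ordIso card_of_Times_same_infinite)

lemma not_lepoll_if_Pow_lepoll: "Pow B \<lesssim> A \<Longrightarrow> \<not> A \<lesssim> B"
  using lepoll_trans lesspoll_Pow_self lepoll_antisym lesspoll_def by blast

lemma wedge_of_copies:
  fixes K :: "'a set"
  assumes K: "infinite K" and X: "X \<subseteq> K" and x0: "x0 \<in> X"
  obtains q f h where "q \<in> K"
    and "\<And>i. i \<in> K \<Longrightarrow> f i \<in> X \<rightarrow>\<^sub>E K \<and> f i x0 = q"
    and "\<And>j. j \<in> K \<Longrightarrow> h j \<in> K \<rightarrow>\<^sub>E X \<and> h j q = x0"
    and "\<And>j. j \<in> K \<Longrightarrow> compose X (h j) (f j) = (\<lambda>x\<in>X. x0)"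
    and "\<And>i j. \<lbrakk>i \<in> K; j \<in> K; i \<noteq> j\<rbrakk> \<Longrightarrow> compose X (h j) (f i) = (\<lambda>x\<in>X. x)"
proof -
  obtain c where c_inj: "inj_on c (K \<times> K)" and c_into: "c ` (K \<times> K) \<subseteq> K"
    using eqpoll_imp_lepoll[OF infinite_times_self_eqpoll[OF K]] by (auto simp: lepoll_def)
  have x0K: "x0 \<in> K" using X x0 by blast
  have c_K: "c (a, b) \<in> K" if "a \<in> K" "b \<in> K" for a b
    using c_into that by blast
  \<comment> \<open>the wedge lives in K \<times> K: copy i of X is (X - {x0}) \<times> {i}, with common base point (x0, x0)\<close>
  define f where "f i = (\<lambda>x\<in>X. c (x, if x = x0 then x0 else i))" for i
  define h where "h j = (\<lambda>z\<in>K. case inv_into (K \<times> K) c z of (x, i) \<Rightarrow>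
                            if x \<in> X \<and> i \<noteq> j then x else x0)" for j
  have h_f: "h j (f i x) = (if x \<noteq> x0 \<and> i = j then x0 else x)" if "i \<in> K" "x \<in> X" for i j x
  proof -
    have "(x, if x = x0 then x0 else i) \<in> K \<times> K" using that X x0K by auto
    then show ?thesis
      using that c_K by (auto simp: f_def h_def inv_into_f_f[OF c_inj])
  qed
  show thesis
  proof
    show "c (x0, x0) \<in> K" using c_K x0K by blast
    show "f i \<in> X \<rightarrow>\<^sub>E K \<and> f i x0 = c (x0, x0)" if "i \<in> K" for i
      using that X c_K x0K x0 by (auto simp: f_def)
    show "h j \<in> K \<rightarrow>\<^sub>E X \<and> h j (c (x0, x0)) = x0" if "j \<in> K" for j
      using h_f[OF that x0] x0 by (auto simp: h_def f_def split: prod.split)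
    show "compose X (h j) (f j) = (\<lambda>x\<in>X. x0)" if "j \<in> K" for j
      using h_f[OF that] by (auto simp: compose_def)
    show "compose X (h j) (f i) = (\<lambda>x\<in>X. x)" if "i \<in> K" "i \<noteq> j" for i j
      using h_f[OF that(1)] that(2) by (auto simp: compose_def)
  qed
qed

locale concrete_functor =
  fixes Obj :: "'o \<Rightarrow> bool" and U :: "'o \<Rightarrow> 'a set"
    and Hom :: "'o \<Rightarrow> 'o \<Rightarrow> ('a \<Rightarrow> 'a) \<Rightarrow> bool"
    and U' :: "'p \<Rightarrow> 'b set" and FO :: "'o \<Rightarrow> 'p"
    and FM :: "'o \<Rightarrow> 'o \<Rightarrow> ('a \<Rightarrow> 'a) \<Rightarrow> ('b \<Rightarrow> 'b)"
  assumes FM_PiE: "\<lbrakk>Obj P; Obj Q; Hom P Q f\<rbrakk> \<Longrightarrow> FM P Q f \<in> U' (FO P) \<rightarrow>\<^sub>E U' (FO Q)"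
    and FM_id: "Obj P \<Longrightarrow> FM P P (\<lambda>x\<in>U P. x) = (\<lambda>y\<in>U' (FO P). y)"
    and FM_compose: "\<lbrakk>Obj P; Obj Q; Obj R; Hom P Q f; Hom Q R g\<rbrakk> \<Longrightarrow>
      FM P R (compose (U P) g f) = compose (U' (FO P)) (FM Q R g) (FM P Q f)"
begin

lemma FM_compose_apply:
  assumes "Obj P" "Obj Q" "Obj R" "Hom P Q f" "Hom Q R g" "y \<in> U' (FO P)"
  shows "FM P R (compose (U P) g f) y = FM Q R g (FM P Q f y)"
  using FM_compose[OF assms(1-5)] assms(6) by (simp add: compose_eq)

lemma lepoll_of_separating_family:
  assumes P: "Obj P" and Q: "Obj Q"
    and f: "\<And>i. i \<in> I \<Longrightarrow> Hom P Q (f i)" and h: "\<And>j. j \<in> I \<Longrightarrow> Hom Q P (h j)"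
    and h_f_same: "\<And>j. j \<in> I \<Longrightarrow> compose (U P) (h j) (f j) = e"
    and h_f_other: "\<And>i j. \<lbrakk>i \<in> I; j \<in> I; i \<noteq> j\<rbrakk> \<Longrightarrow> compose (U P) (h j) (f i) = (\<lambda>x\<in>U P. x)"
    and y: "y \<in> U' (FO P)" and moved: "FM P P e y \<noteq> y"
  shows "I \<lesssim> U' (FO Q)"
  unfolding lepoll_def
proof (intro exI conjI)
  show "inj_on (\<lambda>i. FM P Q (f i) y) I"
  proof (rule inj_onI, rule ccontr)
    fix i j assume i: "i \<in> I" and j: "j \<in> I" and ij: "i \<noteq> j"
      and eq: "FM P Q (f i) y = FM P Q (f j) y"
    have "y = FM Q P (h j) (FM P Q (f i) y)"
      using FM_compose_apply[OF P Q P f[OF i] h[OF j] y] h_f_other[OF i j ij] FM_id[OF P] y by simp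
    also have "\<dots> = FM Q P (h j) (FM P Q (f j) y)" using eq by simp
    also have "\<dots> = FM P P e y"
      using FM_compose_apply[OF P Q P f[OF j] h[OF j] y] h_f_same[OF j] by simp
    finally show False using moved by simp
  qed
  show "(\<lambda>i. FM P Q (f i) y) ` I \<subseteq> U' (FO Q)"
    using FM_PiE[OF P Q f] y by blast
qed

lemma bij_betw_FM_retraction:
  assumes P: "Obj P" and T: "Obj T" and t: "Hom P T t" and s: "Hom T P s"
    and t_s: "compose (U T) t s = (\<lambda>x\<in>U T. x)"
    and s_t_trivial: "\<And>y. y \<in> U' (FO P) \<Longrightarrow> FM P P (compose (U P) s t) y = y"
  shows "bij_betw (FM P T t) (U' (FO P)) (U' (FO T))"
proof (rule bij_betwI)
  show "FM P T t \<in> U' (FO P) \<rightarrow> U' (FO T)" "FM T P s \<in> U' (FO T) \<rightarrow> U' (FO P)"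
    using FM_PiE[OF P T t] FM_PiE[OF T P s] by auto
  show "FM T P s (FM P T t y) = y" if "y \<in> U' (FO P)" for y
    using FM_compose_apply[OF P T P t s that] s_t_trivial[OF that] by simp
  show "FM P T t (FM T P s z) = z" if "z \<in> U' (FO T)" for z
    using FM_compose_apply[OF T P T s t that] t_s FM_id[OF T] that by simp
qed

end

lemma concrete_functor_if_is_ne_functor:
  "is_ne_functor K K' FO FM \<Longrightarrow>
    concrete_functor (ne_obj K) (\<lambda>X. X) (\<lambda>X Y f. f \<in> X \<rightarrow>\<^sub>E Y) (\<lambda>X. X) FO FM"
  by unfold_locales (auto simp: is_ne_functor_def)

lemma ne_functor_fixes_constant:
  assumes K: "infinite K" and K_K': "\<not> K \<lesssim> K'" and F: "is_ne_functor K K' FO FM"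
    and X: "ne_obj K X" and x0: "x0 \<in> X" and y: "y \<in> FO X"
  shows "FM X X (\<lambda>x\<in>X. x0) y = y"
proof (rule ccontr)
  interpret concrete_functor "ne_obj K" "\<lambda>X. X" "\<lambda>X Y f. f \<in> X \<rightarrow>\<^sub>E Y" "\<lambda>X. X" FO FM
    using F by (rule concrete_functor_if_is_ne_functor)
  assume moved: "FM X X (\<lambda>x\<in>X. x0) y \<noteq> y"
  have K_obj: "ne_obj K K" using K by (auto simp: ne_obj_def)
  have XK: "X \<subseteq> K" using X by (simp add: ne_obj_def)
  obtain q f h where "q \<in> K"
    and f: "\<And>i. i \<in> K \<Longrightarrow> f i \<in> X \<rightarrow>\<^sub>E K \<and> f i x0 = q"
    and h: "\<And>j. j \<in> K \<Longrightarrow> h j \<in> K \<rightarrow>\<^sub>E X \<and> h j q = x0"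
    and h_f_same: "\<And>j. j \<in> K \<Longrightarrow> compose X (h j) (f j) = (\<lambda>x\<in>X. x0)"
    and h_f_other: "\<And>i j. \<lbrakk>i \<in> K; j \<in> K; i \<noteq> j\<rbrakk> \<Longrightarrow> compose X (h j) (f i) = (\<lambda>x\<in>X. x)"
    using wedge_of_copies[OF K XK x0] by blast
  have "K \<lesssim> FO K"
    using f h by (intro lepoll_of_separating_family[OF X K_obj _ _ h_f_same h_f_other y moved]) auto
  moreover have "FO K \<subseteq> K'"
    using F K_obj by (simp add: is_ne_functor_def ne_obj_def)
  ultimately show False
    using K_K' lepoll_trans subset_imp_lepoll by blast
qed

lemma ne_iso_const_if_not_lepoll:
  assumes K: "infinite K" and K_K': "\<not> K \<lesssim> K'" and F: "is_ne_functor K K' FO FM"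
  shows "ne_iso_const K K' FO FM"
proof -
  interpret concrete_functor "ne_obj K" "\<lambda>X. X" "\<lambda>X Y f. f \<in> X \<rightarrow>\<^sub>E Y" "\<lambda>X. X" FO FM
    using F by (rule concrete_functor_if_is_ne_functor)
  obtain p where p: "p \<in> K" using K infinite_imp_nonempty by blast
  have T: "ne_obj K {p}" using p by (simp add: ne_obj_def)
  define \<eta> where "\<eta> X = FM X {p} (\<lambda>x\<in>X. p)" for X
  have t: "(\<lambda>x\<in>X. p) \<in> X \<rightarrow>\<^sub>E {p}" for X by simp
  have \<eta>_PiE: "\<eta> X \<in> FO X \<rightarrow>\<^sub>E FO {p}" if X: "ne_obj K X" for X
    unfolding \<eta>_def using FM_PiE[OF X T t] .
  have \<eta>_bij: "bij_betw (\<eta> X) (FO X) (FO {p})" if X: "ne_obj K X" for X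
  proof -
    obtain x0 where x0: "x0 \<in> X" using X by (auto simp: ne_obj_def)
    have s: "(\<lambda>z\<in>{p}. x0) \<in> {p} \<rightarrow>\<^sub>E X" using x0 by simp
    have t_s: "compose {p} (\<lambda>x\<in>X. p) (\<lambda>z\<in>{p}. x0) = (\<lambda>z\<in>{p}. z)"
      using x0 by (auto simp: compose_def)
    have s_t: "compose X (\<lambda>z\<in>{p}. x0) (\<lambda>x\<in>X. p) = (\<lambda>x\<in>X. x0)"
      by (auto simp: compose_def)
    show ?thesis
      unfolding \<eta>_def using ne_functor_fixes_constant[OF K K_K' F X x0]
      by (intro bij_betw_FM_retraction[OF X T t s t_s]) (simp add: s_t)
  qed
  have \<eta>_natural: "compose (FO X) (\<eta> Y) (FM X Y f) = compose (FO X) (\<lambda>c\<in>FO {p}. c) (\<eta> X)"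
    if X: "ne_obj K X" and Y: "ne_obj K Y" and f: "f \<in> X \<rightarrow>\<^sub>E Y" for X Y f
  proof -
    have "compose X (\<lambda>y\<in>Y. p) f = (\<lambda>x\<in>X. p)"
      unfolding compose_def using f by (intro restrict_ext) auto
    then have "compose (FO X) (\<eta> Y) (FM X Y f) = \<eta> X"
      unfolding \<eta>_def using FM_compose[OF X Y T f t] by simp
    then show ?thesis
      using Id_compose[of "\<eta> X"] \<eta>_PiE[OF X] by (simp add: PiE_def)
  qed
  have "ne_obj K' (FO {p})" using F T by (simp add: is_ne_functor_def)
  then show ?thesis
    unfolding ne_iso_const_def using \<eta>_PiE \<eta>_bij \<eta>_natural by blast
qed

lemma concrete_functor_if_is_pt_functor:
  "is_pt_functor K K' FO FM \<Longrightarrow> concrete_functor (pt_obj K) fst pt_hom fst FO FM"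
  unfolding is_pt_functor_def by unfold_locales (auto simp: pt_hom_def simp del: split_paired_All)

lemma pt_functor_fixes_constant:
  assumes K: "infinite K" and K_K': "\<not> K \<lesssim> K'" and F: "is_pt_functor K K' FO FM"
    and P: "pt_obj K P" and y: "y \<in> fst (FO P)"
  shows "FM P P (\<lambda>x\<in>fst P. snd P) y = y"
proof (rule ccontr)
  interpret concrete_functor "pt_obj K" fst pt_hom fst FO FM
    using F by (rule concrete_functor_if_is_pt_functor)
  assume moved: "FM P P (\<lambda>x\<in>fst P. snd P) y \<noteq> y"
  have XK: "fst P \<subseteq> K" and x0: "snd P \<in> fst P" using P by (auto simp: pt_obj_def)
  obtain q f h where q: "q \<in> K"
    and f: "\<And>i. i \<in> K \<Longrightarrow> f i \<in> fst P \<rightarrow>\<^sub>E K \<and> f i (snd P) = q"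
    and h: "\<And>j. j \<in> K \<Longrightarrow> h j \<in> K \<rightarrow>\<^sub>E fst P \<and> h j q = snd P"
    and h_f_same: "\<And>j. j \<in> K \<Longrightarrow> compose (fst P) (h j) (f j) = (\<lambda>x\<in>fst P. snd P)"
    and h_f_other: "\<And>i j. \<lbrakk>i \<in> K; j \<in> K; i \<noteq> j\<rbrakk> \<Longrightarrow>
      compose (fst P) (h j) (f i) = (\<lambda>x\<in>fst P. x)"
    using wedge_of_copies[OF K XK x0] by blast
  have Q: "pt_obj K (K, q)" using q by (simp add: pt_obj_def)
  have "K \<lesssim> fst (FO (K, q))"
    using f h by (intro lepoll_of_separating_family[OF P Q _ _ _ h_f_other y moved])
      (auto simp: pt_hom_def h_f_same)
  moreover have "fst (FO (K, q)) \<subseteq> K'"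
    using F Q by (simp add: is_pt_functor_def pt_obj_def)
  ultimately show False
    using K_K' lepoll_trans subset_imp_lepoll by blast
qed

lemma pt_iso_const_if_not_lepoll:
  assumes K: "infinite K" and K_K': "\<not> K \<lesssim> K'" and F: "is_pt_functor K K' FO FM"
  shows "pt_iso_const K K' FO FM"
proof -
  interpret concrete_functor "pt_obj K" fst pt_hom fst FO FM
    using F by (rule concrete_functor_if_is_pt_functor)
  obtain p where p: "p \<in> K" using K infinite_imp_nonempty by blast
  define T where "T = ({p}, p)"
  have T: "pt_obj K T" using p by (simp add: pt_obj_def T_def)
  define \<eta> where "\<eta> P = FM P T (\<lambda>x\<in>fst P. p)" for P
  have t: "pt_hom P T (\<lambda>x\<in>fst P. p)" if "pt_obj K P" for P
    using that by (auto simp: T_def pt_hom_def pt_obj_def)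
  have \<eta>_hom: "pt_hom (FO P) (FO T) (\<eta> P)" if P: "pt_obj K P" for P
    using F P T t[OF P] unfolding is_pt_functor_def \<eta>_def by blast
  have \<eta>_bij: "bij_betw (\<eta> P) (fst (FO P)) (fst (FO T))" if P: "pt_obj K P" for P
  proof -
    have x0: "snd P \<in> fst P" using P by (simp add: pt_obj_def)
    have s: "pt_hom T P (\<lambda>z\<in>{p}. snd P)" using x0 by (simp add: T_def pt_hom_def)
    have t_s: "compose (fst T) (\<lambda>x\<in>fst P. p) (\<lambda>z\<in>{p}. snd P) = (\<lambda>z\<in>fst T. z)"
      using x0 by (auto simp: compose_def T_def)
    have s_t: "compose (fst P) (\<lambda>z\<in>{p}. snd P) (\<lambda>x\<in>fst P. p) = (\<lambda>x\<in>fst P. snd P)"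
      by (auto simp: compose_def)
    show ?thesis
      unfolding \<eta>_def using pt_functor_fixes_constant[OF K K_K' F P]
      by (intro bij_betw_FM_retraction[OF P T t[OF P] s t_s]) (simp add: s_t)
  qed
  have \<eta>_natural: "compose (fst (FO P)) (\<eta> Q) (FM P Q f) =
      compose (fst (FO P)) (\<lambda>c\<in>fst (FO T). c) (\<eta> P)"
    if P: "pt_obj K P" and Q: "pt_obj K Q" and f: "pt_hom P Q f" for P Q f
  proof -
    have "compose (fst P) (\<lambda>y\<in>fst Q. p) f = (\<lambda>x\<in>fst P. p)"
      unfolding compose_def using f by (intro restrict_ext) (auto simp: pt_hom_def)
    then have "compose (fst (FO P)) (\<eta> Q) (FM P Q f) = \<eta> P"
      unfolding \<eta>_def using FM_compose[OF P Q T f t[OF Q]] by simp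
    then show ?thesis
      using Id_compose[of "\<eta> P"] \<eta>_hom[OF P] by (simp add: pt_hom_def PiE_def)
  qed
  have "pt_obj K' (FO T)" using F T unfolding is_pt_functor_def by blast
  then show ?thesis
    unfolding pt_iso_const_def using \<eta>_hom \<eta>_bij \<eta>_natural by blast
qed

theorem proposition2p10:
  fixes K :: "'a set" and K' :: "'b set"
  assumes "infinite K"
    and "\<exists>e. inj_on e (Pow K') \<and> e ` Pow K' \<subseteq> K"
  shows "(\<forall>FO FM. is_ne_functor K K' FO FM \<longrightarrow> ne_iso_const K K' FO FM) \<and>
         (\<forall>FO FM. is_pt_functor K K' FO FM \<longrightarrow> pt_iso_const K K' FO FM)"
proof -
  have "\<not> K \<lesssim> K'"
    using assms(2) by (intro not_lepoll_if_Pow_lepoll) (simp add: lepoll_def)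
  then show ?thesis
    using ne_iso_const_if_not_lepoll pt_iso_const_if_not_lepoll assms(1) by blast
qed

end
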